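(* In the two-period, two-sequence crossover design ($T=2$, $\mathcal{S}^{\mathrm{obs}}=\{AB,BA\}$, $N_{AB},N_{BA}\ge1$) under complete randomization, suppose Assumption 1 holds. Then the only unbiased linear estimator of $\tau_1$ is $\widehat Y_1(AB)-\widehat Y_1(BA)$, and for each $z\in\{A,B\}$ there is no unbiased linear estimator of $\tau_2(z)$ nor of $\tau_2^1(z)$.
   Context: Setup: $N$ units, treatments $A,B$, $T$ periods; sequences $\vec z\in\{A,B\}^T$, $\vec z_{[t_1,t_2]}=z_{t_1}\cdots z_{t_2}$. Complete randomization: fixed positive group sizes $N_{\vec z}$ for $\vec z\in\mathcal{S}^{\mathrm{obs}}$ summing to $N$, assignment uniform over assignments with these group sizes. Fixed potential outcomes $Y_{it}(\vec z)$ for all $\vec z\in\{A,B\}^T$ (including unimplemented sequences); observed $Y_{it}=Y_{it}(\vec Z_i)$; randomness only from assignment. $\bar Y_t(\vec z)=N^{-1}\sum_iY_{it}(\vec z)$, $\widehat Y_t(\vec z)=N_{\vec z}^{-1}\sum_iY_{it}\mathbf1(\vec Z_i=\vec z)$. Assumption 1 (no anticipation): $Y_{it}(\vec z)=Y_{it}(\vec z')$ whenever $\vec z_{[1,t]}=\vec z'_{[1,t]}$. Estimands: $\tau_1=\bar Y_1(A)-\bar Y_1(B)$, $\tau_2(z_1)=\bar Y_2(z_1A)-\bar Y_2(z_1B)$, $\tau_2^1(z_2)=\bar Y_2(Az_2)-\bar Y_2(Bz_2)$. A linear estimator is $\sum_{t=1}^2\sum_{\vec z\in\mathcal{S}^{\mathrm{obs}}}\tilde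 w_t(\vec z)\widehat Y_t(\vec z)$ with non-random real weights; it is unbiased for an estimand if its expectation equals the estimand for every finite population of potential outcomes satisfying the stated assumptions. *)

theory Defs
  imports Complex_Main "HOL-Library.FuncSet"
begin

text \<open>Two treatments and two periods; a treatment sequence is a pair (z1, z2).
  Units are 0..N-1, periods are 1 and 2.\<close>

datatype trt = A | B

type_synonym seq2 = "trt \<times> trt"

type_synonym pot_outcomes = "nat \<Rightarrow> nat \<Rightarrow> seq2 \<Rightarrow> real"

definition prefix_agree :: "nat \<Rightarrow> seq2 \<Rightarrow> seq2 \<Rightarrow> bool" where
  "prefix_agree t z z' \<longleftrightarrow> (1 \<le> t \<longrightarrow> fst z = fst z') \<and> (2 \<le> t \<longrightarrow> snd z = snd z')"

definition no_anticipation :: "pot_outcomes \<Rightarrow> bool" where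
  "no_anticipation Y \<longleftrightarrow>
     (\<forall>i t z z'. t \<in> {1,2} \<and> prefix_agree t z z' \<longrightarrow> Y i t z = Y i t z')"

definition assignments :: "nat \<Rightarrow> seq2 set \<Rightarrow> (seq2 \<Rightarrow> nat) \<Rightarrow> (nat \<Rightarrow> seq2) set" where
  "assignments N S Nz =
     {Z \<in> {..<N} \<rightarrow>\<^sub>E S. \<forall>z\<in>S. card {i\<in>{..<N}. Z i = z} = Nz z}"

definition expect_CR :: "nat \<Rightarrow> seq2 set \<Rightarrow> (seq2 \<Rightarrow> nat) \<Rightarrow> ((nat \<Rightarrow> seq2) \<Rightarrow> real) \<Rightarrow> real" where
  "expect_CR N S Nz f =
     (\<Sum>Z\<in>assignments N S Nz. f Z) / real (card (assignments N S Nz))"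

definition Ybar :: "nat \<Rightarrow> pot_outcomes \<Rightarrow> nat \<Rightarrow> seq2 \<Rightarrow> real" where
  "Ybar N Y t z = (\<Sum>i<N. Y i t z) / real N"

definition Yhat :: "nat \<Rightarrow> (seq2 \<Rightarrow> nat) \<Rightarrow> pot_outcomes \<Rightarrow> nat \<Rightarrow> seq2 \<Rightarrow> (nat \<Rightarrow> seq2) \<Rightarrow> real" where
  "Yhat N Nz Y t z Z = (\<Sum>i\<in>{i\<in>{..<N}. Z i = z}. Y i t (Z i)) / real (Nz z)"

definition lin_est :: "nat \<Rightarrow> seq2 set \<Rightarrow> (seq2 \<Rightarrow> nat) \<Rightarrow> (nat \<Rightarrow> seq2 \<Rightarrow> real)
                      \<Rightarrow> pot_outcomes \<Rightarrow> (nat \<Rightarrow> seq2) \<Rightarrow> real" where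
  "lin_est N S Nz w Y Z = (\<Sum>t\<in>{1,2}. \<Sum>z\<in>S. w t z * Yhat N Nz Y t z Z)"

definition unbiased :: "nat \<Rightarrow> seq2 set \<Rightarrow> (seq2 \<Rightarrow> nat) \<Rightarrow> (nat \<Rightarrow> seq2 \<Rightarrow> real)
                       \<Rightarrow> (pot_outcomes \<Rightarrow> real) \<Rightarrow> bool" where
  "unbiased N S Nz w \<theta> \<longleftrightarrow>
     (\<forall>Y. no_anticipation Y \<longrightarrow> expect_CR N S Nz (lin_est N S Nz w Y) = \<theta> Y)"

text \<open>Estimands. \<open>\<bar>Y\<close>_1(A) is represented by the period-1 mean under any sequence
  starting with A (well defined under Assumption 1); we use AB and BA.\<close>
definition tau1 :: "nat \<Rightarrow> pot_outcomes \<Rightarrow> real" where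
  "tau1 N Y = Ybar N Y 1 (A,B) - Ybar N Y 1 (B,A)"

definition tau2 :: "nat \<Rightarrow> trt \<Rightarrow> pot_outcomes \<Rightarrow> real" where
  "tau2 N z1 Y = Ybar N Y 2 (z1,A) - Ybar N Y 2 (z1,B)"

definition tau2_1 :: "nat \<Rightarrow> trt \<Rightarrow> pot_outcomes \<Rightarrow> real" where
  "tau2_1 N z2 Y = Ybar N Y 2 (A,z2) - Ybar N Y 2 (B,z2)"

end

theory Submission
  imports Defs "HOL-Combinatorics.Transposition"
begin

text \<open>Under complete randomization every unit is equally likely to land in each group, so each
  group mean \<open>\<hat>Y\<^sub>t(z)\<close> is unbiased for \<open>\<bar>Y\<^sub>t(z)\<close>, and a linear estimator has expectation
  \<open>\<Sum> w\<^sub>t(z) \<bar>Y\<^sub>t(z)\<close> over the observed sequences AB and BA only. Testing unbiasedness on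
  potential outcomes that are indicators of a single period and a single first-period treatment
  (or a single sequence) pins the weights for \<open>\<tau>\<^sub>1\<close>. For \<open>\<tau>\<^sub>2(z)\<close> and \<open>\<tau>\<^sub>2\<^sup>1(z)\<close>, the
  indicator of period 2 under the unobserved sequence zz respects no anticipation, is invisible
  to every linear estimator, yet moves the estimand by \<open>\<plusminus>1\<close>.\<close>

lemma finite_assignments: "finite S \<Longrightarrow> finite (assignments N S Nz)"
  unfolding assignments_def by (rule finite_subset[of _ "{..<N} \<rightarrow>\<^sub>E S"]) (auto intro: finite_PiE)

lemma card_filter_eq_sum_if:
  "finite F \<Longrightarrow> card {x\<in>F. P x} = (\<Sum>x\<in>F. if P x then 1 else 0)"
  unfolding card_eq_sum by (rule sum.inter_filter)

lemma assignments_comp_transpose: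
  assumes "i < N" "j < N" "Z \<in> assignments N S Nz"
  shows "Z \<circ> Transposition.transpose i j \<in> assignments N S Nz"
proof -
  let ?\<sigma> = "Transposition.transpose i j"
  have "bij_betw ?\<sigma> {k\<in>{..<N}. (Z \<circ> ?\<sigma>) k = z} {k\<in>{..<N}. Z k = z}" for z
    by (rule bij_betw_byWitness[where f'="?\<sigma>"]) (use assms in \<open>auto simp: transpose_def\<close>)
  then have "card {k\<in>{..<N}. (Z \<circ> ?\<sigma>) k = z} = card {k\<in>{..<N}. Z k = z}" for z
    by (rule bij_betw_same_card)
  moreover have "Z \<circ> ?\<sigma> \<in> {..<N} \<rightarrow>\<^sub>E S"
    using assms unfolding assignments_def by (auto simp: PiE_def extensional_def Pi_def transpose_def)
  ultimately show ?thesis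
    using assms(3) unfolding assignments_def by simp
qed

lemma card_assignments_unit_in_group_eq:
  assumes "i < N" "j < N"
  shows "card {Z\<in>assignments N S Nz. Z i = z} = card {Z\<in>assignments N S Nz. Z j = z}"
proof -
  let ?\<sigma> = "Transposition.transpose i j"
  have "bij_betw (\<lambda>Z. Z \<circ> ?\<sigma>) {Z\<in>assignments N S Nz. Z j = z} {Z\<in>assignments N S Nz. Z i = z}"
    by (rule bij_betw_byWitness[where f'="\<lambda>Z. Z \<circ> ?\<sigma>"])
       (use assms assignments_comp_transpose in \<open>auto simp: o_def\<close>)
  then show ?thesis by (simp add: bij_betw_same_card)
qed

lemma sum_card_assignments_unit_in_group:
  assumes "finite S" "z \<in> S"
  shows "(\<Sum>i<N. card {Z\<in>assignments N S Nz. Z i = z}) = card (assignments N S Nz) * Nz z"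
proof -
  let ?As = "assignments N S Nz"
  have "(\<Sum>i<N. card {Z\<in>?As. Z i = z}) = (\<Sum>i<N. \<Sum>Z\<in>?As. if Z i = z then 1 else 0)"
    by (simp add: card_filter_eq_sum_if finite_assignments[OF assms(1)])
  also have "\<dots> = (\<Sum>Z\<in>?As. \<Sum>i<N. if Z i = z then 1 else 0)"
    by (rule sum.swap)
  also have "\<dots> = (\<Sum>Z\<in>?As. card {i\<in>{..<N}. Z i = z})"
    by (simp only: card_filter_eq_sum_if[OF finite_lessThan])
  also have "\<dots> = (\<Sum>Z\<in>?As. Nz z)"
    using assms(2) by (intro sum.cong) (auto simp: assignments_def)
  finally show ?thesis by simp
qed

lemma expect_CR_Yhat:
  assumes "finite S" "z \<in> S" "N > 0" "Nz z > 0" "assignments N S Nz \<noteq> {}"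
  shows "expect_CR N S Nz (Yhat N Nz Y t z) = Ybar N Y t z"
proof -
  let ?As = "assignments N S Nz"
  \<comment> \<open>transpositions of units act on assignments, so this count is the same for every unit\<close>
  define c where "c = card {Z\<in>?As. Z 0 = z}"
  have c: "card {Z\<in>?As. Z i = z} = c" if "i < N" for i
    unfolding c_def using card_assignments_unit_in_group_eq[OF that assms(3)] .
  have "N * c = card ?As * Nz z"
    using sum_card_assignments_unit_in_group[OF assms(1,2), of N Nz] c by simp
  then have c_eq: "real c = real (card ?As) * real (Nz z) / real N"
    using assms(3) by (simp add: field_simps flip: of_nat_mult)
  have "(\<Sum>Z\<in>?As. \<Sum>i\<in>{i\<in>{..<N}. Z i = z}. Y i t (Z i))
      = (\<Sum>Z\<in>?As. \<Sum>i\<in>{i\<in>{..<N}. Z i = z}. Y i t z)"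
    by (intro sum.cong) auto
  also have "\<dots> = (\<Sum>Z\<in>?As. \<Sum>i<N. if Z i = z then Y i t z else 0)"
    by (intro sum.cong refl sum.inter_filter) simp
  also have "\<dots> = (\<Sum>i<N. \<Sum>Z\<in>?As. if Z i = z then Y i t z else 0)"
    by (rule sum.swap)
  also have "\<dots> = (\<Sum>i<N. Y i t z * real (card {Z\<in>?As. Z i = z}))"
    by (simp add: sum.If_cases finite_assignments[OF assms(1)] Int_def conj_commute mult.commute)
  also have "\<dots> = (\<Sum>i<N. Y i t z) * real c"
    by (simp add: c sum_distrib_right)
  finally have "(\<Sum>Z\<in>?As. Yhat N Nz Y t z Z) = (\<Sum>i<N. Y i t z) * real c / real (Nz z)"
    unfolding Yhat_def by (simp add: sum_divide_distrib[symmetric])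
  moreover have "card ?As > 0"
    using assms(5) finite_assignments[OF assms(1)] by (simp add: card_gt_0_iff)
  ultimately show ?thesis
    unfolding expect_CR_def Ybar_def c_eq using assms(3,4) by (simp add: field_simps)
qed

lemma expect_CR_lin_est:
  assumes "finite S" "N > 0" "\<And>z. z \<in> S \<Longrightarrow> Nz z > 0" "assignments N S Nz \<noteq> {}"
  shows "expect_CR N S Nz (lin_est N S Nz w Y) = (\<Sum>t\<in>{1,2}. \<Sum>z\<in>S. w t z * Ybar N Y t z)"
proof -
  let ?As = "assignments N S Nz"
  have "(\<Sum>Z\<in>?As. \<Sum>t\<in>{1,2}. \<Sum>z\<in>S. w t z * Yhat N Nz Y t z Z)
      = (\<Sum>t\<in>{1,2}. \<Sum>z\<in>S. \<Sum>Z\<in>?As. w t z * Yhat N Nz Y t z Z)"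
    by (subst sum.swap) (intro sum.cong refl sum.swap)
  then have "expect_CR N S Nz (lin_est N S Nz w Y)
      = (\<Sum>t\<in>{1,2}. \<Sum>z\<in>S. w t z * expect_CR N S Nz (Yhat N Nz Y t z))"
    unfolding expect_CR_def lin_est_def
    by (simp only: sum_divide_distrib sum_distrib_left times_divide_eq_right)
  also have "\<dots> = (\<Sum>t\<in>{1,2}. \<Sum>z\<in>S. w t z * Ybar N Y t z)"
    using expect_CR_Yhat[OF assms(1) _ assms(2) assms(3) assms(4)] by simp
  finally show ?thesis .
qed

definition period_indicator :: "nat \<Rightarrow> (seq2 \<Rightarrow> bool) \<Rightarrow> pot_outcomes" where
  "period_indicator t\<^sub>0 P i t z = (if t = t\<^sub>0 \<and> P z then 1 else 0)"

lemma Ybar_period_indicator: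
  "N > 0 \<Longrightarrow> Ybar N (period_indicator t\<^sub>0 P) t z = (if t = t\<^sub>0 \<and> P z then 1 else 0)"
  unfolding Ybar_def period_indicator_def by simp

lemma no_anticipation_period_indicator_1:
  "no_anticipation (period_indicator 1 (\<lambda>z. fst z = a))"
  unfolding no_anticipation_def period_indicator_def prefix_agree_def by auto

lemma no_anticipation_period_indicator_2: "no_anticipation (period_indicator 2 P)"
  unfolding no_anticipation_def period_indicator_def prefix_agree_def by (auto simp: prod_eq_iff)

locale crossover_design =
  fixes N :: nat and Nz :: "seq2 \<Rightarrow> nat"
  assumes size_AB_pos: "Nz (A,B) \<ge> 1" and size_BA_pos: "Nz (B,A) \<ge> 1"
    and units_eq: "N = Nz (A,B) + Nz (B,A)"
begin

lemma units_pos: "N > 0"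
  using size_AB_pos units_eq by simp

lemma assignments_nonempty: "assignments N {(A,B), (B,A)} Nz \<noteq> {}"
proof -
  define Z where "Z i = (if i < Nz (A,B) then (A,B) else if i < N then (B,A) else undefined)" for i
  have "{i\<in>{..<N}. Z i = (A,B)} = {..<Nz (A,B)}" "{i\<in>{..<N}. Z i = (B,A)} = {Nz (A,B)..<N}"
    using units_eq by (auto simp: Z_def)
  then have "Z \<in> assignments N {(A,B), (B,A)} Nz"
    using units_eq unfolding assignments_def by (auto simp: Z_def PiE_def extensional_def)
  then show ?thesis by blast
qed

lemma expect_lin_est:
  "expect_CR N {(A,B), (B,A)} Nz (lin_est N {(A,B), (B,A)} Nz w Y)
     = w 1 (A,B) * Ybar N Y 1 (A,B) + w 1 (B,A) * Ybar N Y 1 (B,A)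
       + w 2 (A,B) * Ybar N Y 2 (A,B) + w 2 (B,A) * Ybar N Y 2 (B,A)"
  using size_AB_pos size_BA_pos
  by (subst expect_CR_lin_est[OF _ units_pos _ assignments_nonempty]) auto

lemma unbiased_tau1_iff:
  "unbiased N {(A,B), (B,A)} Nz w (tau1 N)
     \<longleftrightarrow> w 1 (A,B) = 1 \<and> w 1 (B,A) = -1 \<and> w 2 (A,B) = 0 \<and> w 2 (B,A) = 0"
  (is "?unbiased \<longleftrightarrow> ?weights")
proof
  assume ?unbiased
  then have "expect_CR N {(A,B), (B,A)} Nz (lin_est N {(A,B), (B,A)} Nz w Y) = tau1 N Y"
    if "no_anticipation Y" for Y
    using that unfolding unbiased_def by blast
  from this[OF no_anticipation_period_indicator_1[of A]]
       this[OF no_anticipation_period_indicator_1[of B]]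
       this[OF no_anticipation_period_indicator_2[of "\<lambda>z. z = (A,B)"]]
       this[OF no_anticipation_period_indicator_2[of "\<lambda>z. z = (B,A)"]]
  show ?weights
    unfolding expect_lin_est tau1_def Ybar_period_indicator[OF units_pos] by simp
next
  assume ?weights
  then show ?unbiased
    unfolding unbiased_def tau1_def expect_lin_est by simp
qed

lemma not_unbiased_tau2:
  shows "\<not> unbiased N {(A,B), (B,A)} Nz w (tau2 N z)"
    and "\<not> unbiased N {(A,B), (B,A)} Nz w (tau2_1 N z)"
proof -
  let ?Y = "period_indicator 2 (\<lambda>z'. z' = (z,z))"
  have "expect_CR N {(A,B), (B,A)} Nz (lin_est N {(A,B), (B,A)} Nz w ?Y) = 0"
    unfolding expect_lin_est Ybar_period_indicator[OF units_pos] by (cases z) simp_all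
  moreover have "tau2 N z ?Y \<noteq> 0" "tau2_1 N z ?Y \<noteq> 0"
    unfolding tau2_def tau2_1_def Ybar_period_indicator[OF units_pos] by (cases z; simp)+
  ultimately show "\<not> unbiased N {(A,B), (B,A)} Nz w (tau2 N z)"
    and "\<not> unbiased N {(A,B), (B,A)} Nz w (tau2_1 N z)"
    unfolding unbiased_def using no_anticipation_period_indicator_2 by metis+
qed

end

theorem proposition4:
  fixes nAB nBA :: nat
  assumes "nAB \<ge> 1" and "nBA \<ge> 1"
  defines "N \<equiv> nAB + nBA"
    and "S \<equiv> {(A,B), (B,A)}"
    and "Nz \<equiv> (\<lambda>z. if z = (A,B) then nAB else if z = (B,A) then nBA else 0)"
  shows "(\<forall>w. unbiased N S Nz w (tau1 N) \<longleftrightarrow>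
              (w 1 (A,B) = 1 \<and> w 1 (B,A) = -1 \<and> w 2 (A,B) = 0 \<and> w 2 (B,A) = 0))
         \<and> (\<forall>z. \<not> (\<exists>w. unbiased N S Nz w (tau2 N z)) \<and> \<not> (\<exists>w. unbiased N S Nz w (tau2_1 N z)))"
proof -
  interpret crossover_design N Nz
    by unfold_locales (use assms(1,2) in \<open>simp_all add: N_def Nz_def\<close>)
  show ?thesis
    unfolding S_def using unbiased_tau1_iff not_unbiased_tau2 by simp
qed

end
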